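(* Assume $\mu=\mathbb{E}[R]<\infty$. Then for every $\beta\in(0,1)$ there exists $\alpha=\alpha(\beta,\mu)<1$ such that $$\lim_{n\to\infty}\mathbb{P}(A_\alpha(\beta))=0,\qquad A_\alpha(\beta)=\{\exists\,x\neq y\in\mathcal{V}_\alpha:\ |x-y|<n^\beta\},$$ where $\mathcal{V}_\alpha=(\mathbb{Z}/n\mathbb{Z})\setminus X_{\alpha n\ln n/\mu}$.
   Context: Covering process: $R$ takes values in $\{1,2,\dots\}$, $f(r)=\mathbb{P}(R\ge r)$. On $\mathbb{Z}/n\mathbb{Z}$, let $(R_k)$ be i.i.d. copies of $R$, $(U_k)$ i.i.d. uniform on $\mathbb{Z}/n\mathbb{Z}$, independent; $\mathcal{O}_k=\{U_k,\dots,U_k+R_k-1\}$ (mod $n$), $C_0=\emptyset$, $C_k=C_{k-1}\cup\mathcal{O}_k$; with an independent rate-one Poisson process $N(t)$, $X_t=C_{N(t)}$. $|x-y|$ is the distance in the torus $\mathbb{Z}/n\mathbb{Z}$. The parameter $\alpha$ is taken in $(0,1)$. *)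

theory Defs
  imports "HOL-Probability.Probability"
begin

text \<open>The torus Z/nZ is represented by {0..<n}.  The arc O = {u,...,u+r-1} mod n.\<close>
definition arc :: "nat \<Rightarrow> nat \<Rightarrow> nat \<Rightarrow> nat set" where
  "arc n u r = {(u + i) mod n | i. i < r}"

fun covered :: "nat pmf \<Rightarrow> nat \<Rightarrow> nat \<Rightarrow> nat set pmf" where
  "covered R n 0 = return_pmf {}"
| "covered R n (Suc k) =
     bind_pmf (covered R n k) (\<lambda>C. bind_pmf R (\<lambda>r. bind_pmf (pmf_of_set {0..<n})
        (\<lambda>u. return_pmf (C \<union> arc n u r))))"

text \<open>Law of X_t = C_{N(t)}, N a rate-one Poisson process independent of everything.\<close>
definition cover_proc :: "nat pmf \<Rightarrow> nat \<Rightarrow> real \<Rightarrow> nat set pmf" where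
  "cover_proc R n t = bind_pmf (poisson_pmf t) (\<lambda>k. covered R n k)"

definition tdist :: "nat \<Rightarrow> nat \<Rightarrow> nat \<Rightarrow> nat" where
  "tdist n x y = min ((x + n - y) mod n) ((y + n - x) mod n)"

definition uncovered :: "nat \<Rightarrow> nat set \<Rightarrow> nat set" where
  "uncovered n X = {0..<n} - X"

definition close_pair :: "nat \<Rightarrow> real \<Rightarrow> nat set \<Rightarrow> bool" where
  "close_pair n \<beta> X \<longleftrightarrow> (\<exists>x\<in>uncovered n X. \<exists>y\<in>uncovered n X. x \<noteq> y \<and> real (tdist n x y) < real n powr \<beta>)"

end

theory Submission
  imports Defs
begin

text \<open>Two distinct points \<open>x, y\<close> at torus distance \<open>d\<close> are both uncovered at time \<open>t\<close> with
  probability \<open>exp (- t h / n)\<close>, where \<open>h\<close> is the expected number of starting points of a single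
  arc that hit \<open>x\<close> or \<open>y\<close>; for every truncation level \<open>M \<le> n / 2\<close> one has
  \<open>h \<ge> E min(R, M) + E min(R, M, d)\<close>. At \<open>t = \<alpha> n ln n / \<mu>\<close> this is a power of \<open>n\<close>: the at most
  \<open>2 n M\<close> pairs with \<open>d < M\<close> get exponent \<open>- \<alpha> (E min(R, M) + 1) / \<mu>\<close>, and the at most
  \<open>2 n (n\<^sup>\<beta> + 1)\<close> pairs with \<open>d < n\<^sup>\<beta>\<close> get exponent \<open>- 2 \<alpha> E min(R, M) / \<mu>\<close>. Since
  \<open>E min(R, M) \<rightarrow> \<mu>\<close>, choosing \<open>\<alpha>\<close> close to 1 and then \<open>M\<close> large makes both union bounds vanish.\<close>

lemma inj_on_mod_interval: "inj_on (\<lambda>k::nat. k mod n) {a..<a + n}"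
proof (rule inj_onI)
  fix i j assume i: "i \<in> {a..<a + n}" and j: "j \<in> {a..<a + n}" and eq: "i mod n = j mod n"
  show "i = j"
  proof (rule ccontr)
    assume "i \<noteq> j"
    then consider "i < j" | "j < i" by linarith
    then show False
    proof cases
      case 1
      then have "n dvd j - i" using eq mod_eq_dvd_iff_nat[of i j n] by simp
      then show False using 1 i j by (auto dest: dvd_imp_le)
    next
      case 2
      then have "n dvd i - j" using eq mod_eq_dvd_iff_nat[of j i n] by simp
      then show False using 2 i j by (auto dest: dvd_imp_le)
    qed
  qed
qed

lemma mod_mem_arc_window:
  assumes "k \<in> {z + n + 1 - s..<z + n + 1}" and "s \<le> r"
  shows "z mod n \<in> arc n (k mod n) r"
proof -
  have "(k mod n + (z + n - k)) mod n = z mod n"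
    by (subst mod_add_left_eq) (use assms(1) in simp)
  moreover have "z + n - k < r" using assms by auto
  ultimately show ?thesis unfolding arc_def by (auto intro!: exI[of _ "z + n - k"])
qed

definition arc_hits :: "nat \<Rightarrow> nat \<Rightarrow> nat \<Rightarrow> nat \<Rightarrow> nat set" where
  "arc_hits n x y r = {u \<in> {0..<n}. x \<in> arc n u r \<or> y \<in> arc n u r}"

lemma arc_hits_commute: "arc_hits n x y r = arc_hits n y x r"
  unfolding arc_hits_def by auto

text \<open>The starting points \<open>x - j\<close> (\<open>j < s\<close>) and \<open>y - j\<close> (\<open>j < m\<close>), lifted to the windows \<open>I\<close>
  and \<open>J\<close> of naturals, lie disjointly in one interval of length \<open>n\<close>, so they stay distinct mod \<open>n\<close>.\<close>

lemma card_arc_hits_shift: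
  assumes x: "x < n" and y: "y = (x + e) mod n" and s: "s \<le> r" "e + s \<le> n" and m: "m \<le> s" "m \<le> e"
  shows "s + m \<le> card (arc_hits n x y r)"
proof -
  define I where "I = {x + n + 1 - s..<x + n + 1}"
  define J where "J = {x + e + n + 1 - m..<x + e + n + 1}"
  have "I \<union> J \<subseteq> {x + n + 1 - s..<(x + n + 1 - s) + n}"
    using s m unfolding I_def J_def by auto
  then have inj: "inj_on (\<lambda>k. k mod n) (I \<union> J)"
    by (rule inj_on_subset[OF inj_on_mod_interval])
  have "(\<lambda>k. k mod n) ` I \<subseteq> arc_hits n x y r"
    using mod_mem_arc_window[of _ x n s r] x s unfolding I_def arc_hits_def by auto
  moreover have "(\<lambda>k. k mod n) ` J \<subseteq> arc_hits n x y r"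
    using mod_mem_arc_window[of _ "x + e" n m r] x y s m unfolding J_def arc_hits_def by auto
  ultimately have "(\<lambda>k. k mod n) ` (I \<union> J) \<subseteq> arc_hits n x y r" by blast
  then have "card ((\<lambda>k. k mod n) ` (I \<union> J)) \<le> card (arc_hits n x y r)"
    by (rule card_mono[rotated]) (simp add: arc_hits_def)
  moreover have "card ((\<lambda>k. k mod n) ` (I \<union> J)) = s + m"
    using inj m s x unfolding I_def J_def by (simp add: card_image card_Un_disjoint)
  ultimately show ?thesis by simp
qed

lemma torus_offset:
  fixes x y n :: nat
  assumes "x < n" "y < n"
  shows "(x + (y + n - x) mod n) mod n = y"
proof -
  have "(x + (y + n - x) mod n) mod n = (x + (y + n - x)) mod n" by (rule mod_add_right_eq)
  also have "\<dots> = y" using assms by simp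
  finally show ?thesis .
qed

lemma torus_offsets_add:
  fixes x y n :: nat
  assumes "x < n" "y < n" "x \<noteq> y"
  shows "(y + n - x) mod n + (x + n - y) mod n = n"
proof (cases "x < y")
  case True
  have "(y + n - x) mod n = (y - x + n) mod n" using True by (simp add: Nat.add_diff_assoc2)
  also have "\<dots> = y - x" using assms by simp
  finally show ?thesis using True assms by simp
next
  case False
  have "(x + n - y) mod n = (x - y + n) mod n" using False by (simp add: Nat.add_diff_assoc2)
  also have "\<dots> = x - y" using assms by simp
  finally show ?thesis using False assms by simp
qed

lemma torus_offset_pos:
  fixes x y n :: nat
  assumes "x < n" "y < n" "x \<noteq> y"
  shows "0 < (y + n - x) mod n"
proof (rule ccontr)
  assume "\<not> 0 < (y + n - x) mod n"
  then have "(x + (y + n - x) mod n) mod n = x" using assms(1) by simp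
  then show False using torus_offset[OF assms(1,2)] assms(3) by simp
qed

lemma tdist_pos: "x < n \<Longrightarrow> y < n \<Longrightarrow> x \<noteq> y \<Longrightarrow> 0 < tdist n x y"
  unfolding tdist_def using torus_offset_pos[of x n y] torus_offset_pos[of y n x] by simp

lemma card_arc_hits:
  assumes xy: "x < n" "y < n" "x \<noteq> y" and M: "2 * M \<le> n"
  shows "min r M + min r (min M (tdist n x y)) \<le> card (arc_hits n x y r)"
proof -
  have forward: "min r M + min r (min M ((y + n - x) mod n)) \<le> card (arc_hits n x y r)"
    if "x < n" "y < n" "x \<noteq> y" "(y + n - x) mod n \<le> (x + n - y) mod n" for x y
  proof (rule card_arc_hits_shift[OF that(1) torus_offset[OF that(1,2), symmetric]])
    show "(y + n - x) mod n + min r M \<le> n"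
      using torus_offsets_add[OF that(1-3)] that(4) M by linarith
  qed simp_all
  show ?thesis
  proof (cases "(y + n - x) mod n \<le> (x + n - y) mod n")
    case True
    then have "tdist n x y = (y + n - x) mod n" by (simp add: tdist_def)
    then show ?thesis using forward[OF xy True] by simp
  next
    case False
    then have "tdist n x y = (x + n - y) mod n" by (simp add: tdist_def)
    moreover have "min r M + min r (min M ((x + n - y) mod n)) \<le> card (arc_hits n y x r)"
      using False xy by (intro forward) simp_all
    moreover have "arc_hits n x y r = arc_hits n y x r" by (rule arc_hits_commute)
    ultimately show ?thesis by (simp only:)
  qed
qed

lemma card_pairs_tdist_less_nat:
  "card {(x, y). x < n \<and> y < n \<and> tdist n x y < K} \<le> 2 * n * K"
proof -
  let ?P = "{..<n} \<times> {..<K}"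
  let ?F = "(\<lambda>(x, j). (x, (x + j) mod n)) ` ?P"
  let ?G = "(\<lambda>(y, j). ((y + j) mod n, y)) ` ?P"
  have "{(x, y). x < n \<and> y < n \<and> tdist n x y < K} \<subseteq> ?F \<union> ?G"
  proof
    fix p assume "p \<in> {(x, y). x < n \<and> y < n \<and> tdist n x y < K}"
    then obtain x y where p: "p = (x, y)" and xy: "x < n" "y < n" and "tdist n x y < K" by blast
    then consider "(y + n - x) mod n < K" | "(x + n - y) mod n < K"
      unfolding tdist_def by linarith
    then show "p \<in> ?F \<union> ?G"
    proof cases
      case 1
      then show ?thesis using p xy torus_offset[OF xy(1,2)]
        by (auto intro!: image_eqI[of _ _ "(x, (y + n - x) mod n)"])
    next
      case 2
      then show ?thesis using p xy torus_offset[OF xy(2,1)]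
        by (auto intro!: image_eqI[of _ _ "(y, (x + n - y) mod n)"])
    qed
  qed
  then have "card {(x, y). x < n \<and> y < n \<and> tdist n x y < K} \<le> card (?F \<union> ?G)"
    by (intro card_mono) auto
  also have "\<dots> \<le> card ?F + card ?G" by (rule card_Un_le)
  also have "\<dots> \<le> n * K + n * K"
    using card_image_le[of ?P] by (intro add_mono) (simp_all add: card_cartesian_product)
  finally show ?thesis by simp
qed

lemma card_pairs_tdist_less:
  fixes K :: real
  assumes "0 \<le> K"
  shows "real (card {(x, y). x < n \<and> y < n \<and> real (tdist n x y) < K}) \<le> 2 * real n * (K + 1)"
proof -
  have "{(x, y). x < n \<and> y < n \<and> real (tdist n x y) < K}
          = {(x, y). x < n \<and> y < n \<and> tdist n x y < nat \<lceil>K\<rceil>}"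
    by (simp add: zless_nat_eq_int_zless less_ceiling_iff)
  then have "card {(x, y). x < n \<and> y < n \<and> real (tdist n x y) < K} \<le> 2 * n * nat \<lceil>K\<rceil>"
    using card_pairs_tdist_less_nat by simp
  then have "real (card {(x, y). x < n \<and> y < n \<and> real (tdist n x y) < K}) \<le> 2 * real n * real (nat \<lceil>K\<rceil>)"
    using of_nat_mono by fastforce
  also have "\<dots> \<le> 2 * real n * (K + 1)"
    using assms by (intro mult_left_mono) linarith+
  finally show ?thesis .
qed

definition arc_misses :: "nat \<Rightarrow> nat \<Rightarrow> nat \<Rightarrow> nat \<Rightarrow> nat set" where
  "arc_misses n x y r = {u. x \<notin> arc n u r \<and> y \<notin> arc n u r}"

definition pair_miss_prob :: "nat pmf \<Rightarrow> nat \<Rightarrow> nat \<Rightarrow> nat \<Rightarrow> ennreal" where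
  "pair_miss_prob R n x y = (\<integral>\<^sup>+ r. emeasure (pmf_of_set {0..<n}) (arc_misses n x y r) \<partial>R)"

lemma emeasure_covered_avoids:
  "emeasure (covered R n k) {X. x \<notin> X \<and> y \<notin> X} = pair_miss_prob R n x y ^ k"
proof (induction k)
  case 0
  then show ?case by (simp add: indicator_def)
next
  case (Suc k)
  let ?A = "{X. x \<notin> X \<and> y \<notin> X}"
  have "indicator ?A (C \<union> arc n u r) = (indicator ?A C * indicator (arc_misses n x y r) u :: ennreal)"
    for C u r by (auto simp: indicator_def arc_misses_def)
  then have "emeasure (covered R n (Suc k)) ?A = (\<integral>\<^sup>+C. indicator ?A C * pair_miss_prob R n x y \<partial>covered R n k)"
    by (simp add: nn_integral_cmult pair_miss_prob_def)
  also have "\<dots> = emeasure (covered R n k) ?A * pair_miss_prob R n x y"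
    by (simp add: nn_integral_multc)
  finally show ?case using Suc by (simp add: mult.commute)
qed

lemma nn_integral_poisson_power:
  fixes t q :: real
  assumes t: "0 < t" and q: "0 \<le> q"
  shows "(\<integral>\<^sup>+k. ennreal (q ^ k) \<partial>poisson_pmf t) = ennreal (exp (- t) * exp (t * q))"
proof -
  have s: "(\<lambda>k. (t * q) ^ k / fact k * exp (- t)) sums (exp (t * q) * exp (- t))"
    using sums_mult2[OF exp_converges[of "t * q"], of "exp (- t)"]
    by (simp add: divide_inverse mult.commute scaleR_conv_of_real)
  have "(\<integral>\<^sup>+k. ennreal (q ^ k) \<partial>poisson_pmf t) =
        (\<integral>\<^sup>+k. ennreal ((t * q) ^ k / fact k * exp (- t)) \<partial>count_space UNIV)"
    unfolding nn_integral_measure_pmf using t q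
    by (intro nn_integral_cong) (simp add: ennreal_mult'[symmetric] power_mult_distrib field_simps)
  also have "\<dots> = (\<Sum>k. ennreal ((t * q) ^ k / fact k * exp (- t)))"
    by (rule nn_integral_count_space_nat)
  also have "\<dots> = ennreal (exp (- t) * exp (t * q))"
    using s t q by (subst suminf_ennreal2) (auto simp: sums_iff mult.commute)
  finally show ?thesis .
qed

definition trunc_mean :: "nat pmf \<Rightarrow> nat \<Rightarrow> real" where
  "trunc_mean R k = (\<integral>r. real (min r k) \<partial>R)"

lemma integrable_min_const: "integrable (measure_pmf (R :: nat pmf)) (\<lambda>r. real (min r k))"
  by (rule measure_pmf.integrable_const_bound[where B = "real k"]) auto

lemma trunc_mean_ge_1:
  fixes R :: "nat pmf"
  assumes "set_pmf R \<subseteq> {1..}" "1 \<le> k"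
  shows "1 \<le> trunc_mean R k"
proof -
  have "(\<integral>r. 1 \<partial>R) \<le> trunc_mean R k"
    unfolding trunc_mean_def
  proof (rule integral_mono_AE)
    show "AE r in measure_pmf R. 1 \<le> real (min r k)"
      unfolding AE_measure_pmf_iff using assms by force
  qed (auto simp: integrable_min_const)
  then show ?thesis by simp
qed

lemma trunc_mean_tendsto_expectation:
  fixes R :: "nat pmf"
  assumes "integrable (measure_pmf R) real"
  shows "trunc_mean R \<longlonglongrightarrow> measure_pmf.expectation R real"
  unfolding trunc_mean_def
proof (rule integral_dominated_convergence[where w = real])
  show "AE r in measure_pmf R. (\<lambda>k. real (min r k)) \<longlonglongrightarrow> real r"
  proof (rule AE_I2)
    fix r :: nat
    have "eventually (\<lambda>k. real (min r k) = real r) sequentially"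
      using eventually_ge_at_top[of r] by eventually_elim auto
    then show "(\<lambda>k. real (min r k)) \<longlonglongrightarrow> real r" by (rule tendsto_eventually)
  qed
qed (auto simp: assms)

lemma measure_arc_misses_le:
  assumes xy: "x < n" "y < n" "x \<noteq> y" and M: "2 * M \<le> n"
  shows "measure (pmf_of_set {0..<n}) (arc_misses n x y r)
           \<le> 1 - (real (min r M) + real (min r (min M (tdist n x y)))) / n"
proof -
  have n: "0 < n" using xy by simp
  have hits: "arc_hits n x y r \<subseteq> {0..<n}" unfolding arc_hits_def by auto
  have "{0..<n} \<inter> arc_misses n x y r = {0..<n} - arc_hits n x y r"
    unfolding arc_misses_def arc_hits_def by auto
  then have "measure (pmf_of_set {0..<n}) (arc_misses n x y r) = real (n - card (arc_hits n x y r)) / n"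
    using n hits by (simp add: measure_pmf_of_set card_Diff_subset finite_subset)
  also have "\<dots> = 1 - real (card (arc_hits n x y r)) / n"
    using n card_mono[OF _ hits] by (simp add: of_nat_diff field_simps)
  also have "\<dots> \<le> 1 - (real (min r M) + real (min r (min M (tdist n x y)))) / n"
    using card_arc_hits[OF xy M, of r] n
    by (intro diff_left_mono divide_right_mono) (simp_all flip: of_nat_add)
  finally show ?thesis .
qed

lemma pair_miss_prob_eq:
  fixes R :: "nat pmf"
  assumes "0 < n"
  shows "pair_miss_prob R n x y = ennreal (\<integral>r. measure (pmf_of_set {0..<n}) (arc_misses n x y r) \<partial>R)"
proof -
  have "integrable (measure_pmf R) (\<lambda>r. measure (pmf_of_set {0..<n}) (arc_misses n x y r))"
    by (rule measure_pmf.integrable_const_bound[where B = 1]) auto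
  then show ?thesis
    unfolding pair_miss_prob_def using assms
    by (simp add: measure_pmf.emeasure_eq_measure nn_integral_eq_integral)
qed

lemma expectation_arc_misses_le:
  fixes R :: "nat pmf"
  assumes xy: "x < n" "y < n" "x \<noteq> y" and M: "2 * M \<le> n"
  shows "(\<integral>r. measure (pmf_of_set {0..<n}) (arc_misses n x y r) \<partial>R)
           \<le> 1 - (trunc_mean R M + trunc_mean R (min M (tdist n x y))) / n"
proof -
  let ?d = "min M (tdist n x y)"
  have "(\<integral>r. measure (pmf_of_set {0..<n}) (arc_misses n x y r) \<partial>R)
          \<le> (\<integral>r. 1 - (real (min r M) + real (min r ?d)) / n \<partial>R)"
  proof (rule integral_mono)
    show "integrable R (\<lambda>r. measure (pmf_of_set {0..<n}) (arc_misses n x y r))"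
      by (rule measure_pmf.integrable_const_bound[where B = 1]) auto
    show "integrable R (\<lambda>r. 1 - (real (min r M) + real (min r ?d)) / n)"
      using integrable_min_const[of R M] integrable_min_const[of R ?d] by simp
  qed (rule measure_arc_misses_le[OF xy M])
  also have "\<dots> = 1 - (trunc_mean R M + trunc_mean R ?d) / n"
    using integrable_min_const[of R M] integrable_min_const[of R ?d]
    by (simp add: trunc_mean_def add_divide_distrib)
  finally show ?thesis .
qed

lemma prob_pair_uncovered_le:
  fixes R :: "nat pmf"
  assumes t: "0 < t" and xy: "x < n" "y < n" "x \<noteq> y" and M: "2 * M \<le> n"
  shows "measure_pmf.prob (cover_proc R n t) {X. x \<notin> X \<and> y \<notin> X}
           \<le> exp (- (t * (trunc_mean R M + trunc_mean R (min M (tdist n x y))) / n))"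
proof -
  define q where "q = (\<integral>r. measure (pmf_of_set {0..<n}) (arc_misses n x y r) \<partial>R)"
  have q: "0 \<le> q" "q \<le> 1 - (trunc_mean R M + trunc_mean R (min M (tdist n x y))) / n"
    unfolding q_def using expectation_arc_misses_le[OF xy M] by auto
  have "emeasure (cover_proc R n t) {X. x \<notin> X \<and> y \<notin> X} = (\<integral>\<^sup>+k. ennreal (q ^ k) \<partial>poisson_pmf t)"
    unfolding cover_proc_def q_def using xy
    by (simp add: emeasure_covered_avoids pair_miss_prob_eq ennreal_power)
  also have "\<dots> = ennreal (exp (- t) * exp (t * q))"
    by (rule nn_integral_poisson_power[OF t q(1)])
  finally have "measure_pmf.prob (cover_proc R n t) {X. x \<notin> X \<and> y \<notin> X} = exp (- (t * (1 - q)))"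
    by (simp add: measure_pmf.emeasure_eq_measure exp_add[symmetric] algebra_simps)
  also have "\<dots> \<le> exp (- (t * (trunc_mean R M + trunc_mean R (min M (tdist n x y))) / n))"
  proof -
    have "(trunc_mean R M + trunc_mean R (min M (tdist n x y))) / n \<le> 1 - q" using q(2) by linarith
    then have "t * ((trunc_mean R M + trunc_mean R (min M (tdist n x y))) / n) \<le> t * (1 - q)"
      by (rule mult_left_mono) (use t in simp)
    then show ?thesis by simp
  qed
  finally show ?thesis .
qed

lemma prob_pair_uncovered_le_powr:
  fixes R :: "nat pmf" and \<alpha> \<mu> :: real
  assumes pos: "set_pmf R \<subseteq> {1..}" and M: "1 \<le> M" "2 * M \<le> n"
    and xy: "x < n" "y < n" "x \<noteq> y" and \<alpha>: "0 < \<alpha>" and \<mu>: "0 < \<mu>"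
  shows "measure_pmf.prob (cover_proc R n (\<alpha> * n * ln n / \<mu>)) {X. x \<notin> X \<and> y \<notin> X}
           \<le> (if tdist n x y < M then n powr (- (\<alpha> * (trunc_mean R M + 1) / \<mu>)) else 0)
              + n powr (- (2 * \<alpha> * trunc_mean R M / \<mu>))"
proof -
  let ?G = "trunc_mean R M" and ?g = "trunc_mean R (min M (tdist n x y))"
  have n: "2 \<le> n" using M by linarith
  have "0 < \<alpha> * n * ln n / \<mu>" using n \<alpha> \<mu> by (simp add: ln_gt_zero)
  then have "measure_pmf.prob (cover_proc R n (\<alpha> * n * ln n / \<mu>)) {X. x \<notin> X \<and> y \<notin> X}
          \<le> exp (- (\<alpha> * n * ln n / \<mu> * (?G + ?g) / n))"
    by (rule prob_pair_uncovered_le[OF _ xy M(2)])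
  also have "\<dots> = n powr (- (\<alpha> * (?G + ?g) / \<mu>))"
    using n by (simp add: powr_def)
  also have "\<dots> \<le> (if tdist n x y < M then n powr (- (\<alpha> * (?G + 1) / \<mu>)) else 0)
                  + n powr (- (2 * \<alpha> * ?G / \<mu>))"
  proof (cases "tdist n x y < M")
    case True
    have "1 \<le> ?g" using tdist_pos[OF xy] M by (intro trunc_mean_ge_1[OF pos]) auto
    then have "n powr (- (\<alpha> * (?G + ?g) / \<mu>)) \<le> n powr (- (\<alpha> * (?G + 1) / \<mu>))"
      using n \<alpha> \<mu> by (intro powr_mono) (auto intro!: divide_right_mono mult_left_mono)
    then show ?thesis using True by (simp add: add_increasing2)
  next
    case False
    then have "?g = ?G" by simp
    then show ?thesis using False by (simp add: algebra_simps)
  qed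
  finally show ?thesis .
qed

lemma prob_close_pair_le_sum:
  "measure_pmf.prob P {X. close_pair n \<beta> X}
     \<le> (\<Sum>p\<in>{(x, y). x < n \<and> y < n \<and> x \<noteq> y \<and> real (tdist n x y) < n powr \<beta>}.
          measure_pmf.prob P {X. fst p \<notin> X \<and> snd p \<notin> X})"
proof -
  let ?Pairs = "{(x, y). x < n \<and> y < n \<and> x \<noteq> y \<and> real (tdist n x y) < n powr \<beta>}"
  have "{X. close_pair n \<beta> X} \<subseteq> (\<Union>p\<in>?Pairs. {X. fst p \<notin> X \<and> snd p \<notin> X})"
    unfolding close_pair_def uncovered_def by force
  then have "measure_pmf.prob P {X. close_pair n \<beta> X}
      \<le> measure_pmf.prob P (\<Union>p\<in>?Pairs. {X. fst p \<notin> X \<and> snd p \<notin> X})"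
    by (intro measure_pmf.finite_measure_mono) auto
  also have "\<dots> \<le> (\<Sum>p\<in>?Pairs. measure_pmf.prob P {X. fst p \<notin> X \<and> snd p \<notin> X})"
  proof (rule measure_pmf.finite_measure_subadditive_finite)
    show "finite ?Pairs" by (rule finite_subset[of _ "{..<n} \<times> {..<n}"]) auto
  qed auto
  finally show ?thesis .
qed

lemma prob_close_pair_le:
  fixes R :: "nat pmf" and \<alpha> \<beta> \<mu> :: real
  assumes pos: "set_pmf R \<subseteq> {1..}" and M: "1 \<le> M" "2 * M \<le> n" and \<alpha>: "0 < \<alpha>" and \<mu>: "0 < \<mu>"
  defines "a \<equiv> \<alpha> * (trunc_mean R M + 1) / \<mu>" and "b \<equiv> 2 * \<alpha> * trunc_mean R M / \<mu>"
  shows "measure_pmf.prob (cover_proc R n (\<alpha> * n * ln n / \<mu>)) {X. close_pair n \<beta> X}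
           \<le> 2 * real n * M * n powr (- a) + 2 * real n * (n powr \<beta> + 1) * n powr (- b)"
proof -
  let ?P = "measure_pmf.prob (cover_proc R n (\<alpha> * n * ln n / \<mu>))"
  define Pairs where "Pairs = {(x, y). x < n \<and> y < n \<and> x \<noteq> y \<and> real (tdist n x y) < n powr \<beta>}"
  define Near where "Near = {(x, y). x < n \<and> y < n \<and> tdist n x y < M}"
  have fin: "finite Pairs" by (rule finite_subset[of _ "{..<n} \<times> {..<n}"]) (auto simp: Pairs_def)
  have "?P {X. close_pair n \<beta> X} \<le> (\<Sum>p\<in>Pairs. ?P {X. fst p \<notin> X \<and> snd p \<notin> X})"
    unfolding Pairs_def by (rule prob_close_pair_le_sum)
  also have "\<dots> \<le> (\<Sum>p\<in>Pairs. (if p \<in> Near then n powr (- a) else 0) + n powr (- b))"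
  proof (rule sum_mono)
    fix p assume "p \<in> Pairs"
    then obtain x y where p: "p = (x, y)" and xy: "x < n" "y < n" "x \<noteq> y"
      unfolding Pairs_def by blast
    show "?P {X. fst p \<notin> X \<and> snd p \<notin> X} \<le> (if p \<in> Near then n powr (- a) else 0) + n powr (- b)"
      using prob_pair_uncovered_le_powr[OF pos M xy \<alpha> \<mu>] xy
      unfolding p a_def b_def Near_def by simp
  qed
  also have "\<dots> = real (card (Pairs \<inter> Near)) * n powr (- a) + real (card Pairs) * n powr (- b)"
    using fin by (simp add: sum.distrib sum.If_cases)
  also have "\<dots> \<le> 2 * real n * M * n powr (- a) + 2 * real n * (n powr \<beta> + 1) * n powr (- b)"
  proof (intro add_mono mult_right_mono)
    have "card (Pairs \<inter> Near) \<le> card Near"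
      by (rule card_mono) (auto simp: Near_def intro: finite_subset[of _ "{..<n} \<times> {..<n}"])
    also have "\<dots> \<le> 2 * n * M" unfolding Near_def by (rule card_pairs_tdist_less_nat)
    finally show "real (card (Pairs \<inter> Near)) \<le> 2 * real n * M"
      using of_nat_mono by fastforce
    have "card Pairs \<le> card {(x, y). x < n \<and> y < n \<and> real (tdist n x y) < n powr \<beta>}"
      by (rule card_mono) (auto simp: Pairs_def intro: finite_subset[of _ "{..<n} \<times> {..<n}"])
    then show "real (card Pairs) \<le> 2 * real n * (n powr \<beta> + 1)"
      using card_pairs_tdist_less[of "n powr \<beta>" n] by simp
  qed simp_all
  finally show ?thesis .
qed

lemma prob_close_pair_tendsto_zero:
  fixes R :: "nat pmf" and \<alpha> \<beta> \<mu> :: real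
  assumes pos: "set_pmf R \<subseteq> {1..}" and M: "1 \<le> M" and \<alpha>: "0 < \<alpha>" and \<mu>: "0 < \<mu>"
    and \<beta>: "0 \<le> \<beta>" and exponents: "1 < \<alpha> * (trunc_mean R M + 1) / \<mu>" "1 + \<beta> < 2 * \<alpha> * trunc_mean R M / \<mu>"
  shows "(\<lambda>n. measure_pmf.prob (cover_proc R n (\<alpha> * n * ln n / \<mu>)) {X. close_pair n \<beta> X}) \<longlonglongrightarrow> 0"
proof (rule tendsto_sandwich[OF _ _ tendsto_const])
  define a where "a = \<alpha> * (trunc_mean R M + 1) / \<mu>"
  define b where "b = 2 * \<alpha> * trunc_mean R M / \<mu>"
  define B where "B n = 2 * M * n powr (1 - a) + 2 * n powr (1 + \<beta> - b) + 2 * n powr (1 - b)" for n :: nat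
  have mult_powr: "real n * n powr c = n powr (1 + c)" for n :: nat and c :: real
    by (cases "n = 0") (simp_all add: powr_add)
  have "\<forall>\<^sub>F n in sequentially. 2 * M \<le> n" by (rule eventually_ge_at_top)
  then show "\<forall>\<^sub>F n in sequentially.
      measure_pmf.prob (cover_proc R n (\<alpha> * n * ln n / \<mu>)) {X. close_pair n \<beta> X} \<le> B n"
  proof eventually_elim
    case (elim n)
    have powrs: "real n * n powr (- a) = n powr (1 - a)" "real n * n powr (- b) = n powr (1 - b)"
      "real n * n powr \<beta> * n powr (- b) = n powr (1 + \<beta> - b)"
      by (simp_all add: mult_powr flip: powr_add)
    have "2 * real n * M * n powr (- a) + 2 * real n * (n powr \<beta> + 1) * n powr (- b)
        = 2 * M * (real n * n powr (- a)) + 2 * (real n * n powr \<beta> * n powr (- b)) + 2 * (real n * n powr (- b))"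
      by (simp add: algebra_simps)
    also have "\<dots> = B n" unfolding powrs B_def ..
    finally have "2 * real n * M * n powr (- a) + 2 * real n * (n powr \<beta> + 1) * n powr (- b) = B n" .
    then show ?case
      using prob_close_pair_le[OF pos M elim \<alpha> \<mu>, of \<beta>] unfolding a_def b_def by simp
  qed
  have powr_lim: "(\<lambda>n::nat. real n powr c) \<longlonglongrightarrow> 0" if "c < 0" for c
    by (rule tendsto_neg_powr[OF that filterlim_real_sequentially])
  have "B \<longlonglongrightarrow> real (2 * M) * 0 + 2 * 0 + 2 * (0 :: real)"
    unfolding B_def a_def b_def using exponents \<beta>
    by (intro tendsto_add tendsto_mult tendsto_const powr_lim) auto
  then show "B \<longlonglongrightarrow> 0" by simp
qed simp

lemma expectation_ge_1:
  fixes R :: "nat pmf"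
  assumes "set_pmf R \<subseteq> {1..}" and "integrable (measure_pmf R) real"
  shows "1 \<le> measure_pmf.expectation R real"
  using trunc_mean_tendsto_expectation[OF assms(2)]
  by (rule LIMSEQ_le_const) (use trunc_mean_ge_1[OF assms(1)] in auto)

text \<open>As \<open>M \<rightarrow> \<infinity>\<close> the two exponent conditions tend to \<open>\<mu> / (\<mu> + 1) < \<alpha>\<close> and \<open>(1 + \<beta>) / 2 < \<alpha>\<close>,
  both satisfiable with \<open>\<alpha> < 1\<close>.\<close>

lemma exists_exponent_and_truncation:
  fixes R :: "nat pmf" and \<beta> \<mu> :: real
  assumes lim: "trunc_mean R \<longlonglongrightarrow> \<mu>" and \<mu>: "0 < \<mu>" and \<beta>: "\<beta> < 1"
  obtains \<alpha> M where "0 < \<alpha>" "\<alpha> < 1" "1 \<le> M"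
    "1 < \<alpha> * (trunc_mean R M + 1) / \<mu>" "1 + \<beta> < 2 * \<alpha> * trunc_mean R M / \<mu>"
proof -
  have "max ((1 + \<beta>) / 2) (\<mu> / (\<mu> + 1)) < 1" using \<beta> \<mu> by simp
  then obtain \<alpha> where "max ((1 + \<beta>) / 2) (\<mu> / (\<mu> + 1)) < \<alpha>" "\<alpha> < 1"
    using dense by blast
  then have "(1 + \<beta>) / 2 < \<alpha>" "\<mu> / (\<mu> + 1) < \<alpha>" "\<alpha> < 1" by simp_all
  moreover have "0 < \<mu> / (\<mu> + 1)" using \<mu> by simp
  ultimately have \<alpha>: "1 + \<beta> < 2 * \<alpha>" "\<mu> < \<alpha> * (\<mu> + 1)" "\<alpha> < 1" "0 < \<alpha>"
    using \<mu> by (simp_all add: field_simps, linarith)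
  have "(\<lambda>k. \<alpha> * (trunc_mean R k + 1)) \<longlonglongrightarrow> \<alpha> * (\<mu> + 1)"
    "(\<lambda>k. 2 * \<alpha> * trunc_mean R k) \<longlonglongrightarrow> 2 * \<alpha> * \<mu>"
    using lim by (auto intro!: tendsto_intros)
  moreover have "(1 + \<beta>) * \<mu> < 2 * \<alpha> * \<mu>" using \<alpha>(1) \<mu> by simp
  ultimately have "\<forall>\<^sub>F k in sequentially.
      1 \<le> k \<and> \<mu> < \<alpha> * (trunc_mean R k + 1) \<and> (1 + \<beta>) * \<mu> < 2 * \<alpha> * trunc_mean R k"
    using \<alpha>(2) eventually_ge_at_top[of 1] by (auto intro!: eventually_conj order_tendstoD(1))
  then obtain M where "1 \<le> M" "\<mu> < \<alpha> * (trunc_mean R M + 1)" "(1 + \<beta>) * \<mu> < 2 * \<alpha> * trunc_mean R M"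
    by (auto simp: eventually_sequentially)
  with \<alpha> \<mu> show ?thesis
    by (intro that[of \<alpha> M]) (simp_all add: field_simps)
qed

theorem mainTheorem6:
  fixes R :: "nat pmf"
  assumes pos: "set_pmf R \<subseteq> {1..}"
    and finite_mean: "integrable (measure_pmf R) real"
  shows "\<forall>\<beta>. 0 < \<beta> \<and> \<beta> < 1 \<longrightarrow>
    (\<exists>\<alpha>. 0 < \<alpha> \<and> \<alpha> < 1 \<and>
      ((\<lambda>n. measure_pmf.prob
          (cover_proc R n (\<alpha> * real n * ln (real n) / measure_pmf.expectation R real))
          {X. close_pair n \<beta> X}) \<longlonglongrightarrow> 0))"
proof (intro allI impI)
  fix \<beta> :: real assume \<beta>: "0 < \<beta> \<and> \<beta> < 1"
  define \<mu> where "\<mu> = measure_pmf.expectation R real"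
  have \<mu>: "0 < \<mu>" using expectation_ge_1[OF pos finite_mean] unfolding \<mu>_def by simp
  obtain \<alpha> M where \<alpha>: "0 < \<alpha>" "\<alpha> < 1" and M: "1 \<le> M"
    and exponents: "1 < \<alpha> * (trunc_mean R M + 1) / \<mu>" "1 + \<beta> < 2 * \<alpha> * trunc_mean R M / \<mu>"
    using exists_exponent_and_truncation[OF trunc_mean_tendsto_expectation[OF finite_mean]] \<mu> \<beta>
    unfolding \<mu>_def by blast
  have "(\<lambda>n. measure_pmf.prob (cover_proc R n (\<alpha> * n * ln n / \<mu>)) {X. close_pair n \<beta> X}) \<longlonglongrightarrow> 0"
    using \<beta> by (intro prob_close_pair_tendsto_zero[OF pos M \<alpha>(1) \<mu> _ exponents]) simp
  with \<alpha> show "\<exists>\<alpha>. 0 < \<alpha> \<and> \<alpha> < 1 \<and>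
      ((\<lambda>n. measure_pmf.prob
          (cover_proc R n (\<alpha> * real n * ln (real n) / measure_pmf.expectation R real))
          {X. close_pair n \<beta> X}) \<longlonglongrightarrow> 0)"
    unfolding \<mu>_def by blast
qed

end
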